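(* Consider the spatial Stark problem $$\ddot x=-\frac{x}{|q|^3},\qquad \ddot y=-\frac{y}{|q|^3},\qquad \ddot z=-\frac{z}{|q|^3}+1,\qquad q=(x,y,z).$$ For every $s\in(0,1)$ there exists exactly one circular orbit with $z\equiv s$. With the angular momentum $L=x\dot y-y\dot x$ held fixed, this circular orbit is stable if and only if $s<\big(\frac13\big)^{3/2}$.
   Context: A circular orbit is a solution with $z$ constant and $x^2+y^2$ a positive constant (uniform circular motion about the $z$-axis). Stability with $L$ fixed refers to the reduced system obtained by fixing $L$ and using parabolic coordinates $x=\xi\eta\cos\phi$, $y=\xi\eta\sin\phi$, $z=\frac12(\xi^2-\eta^2)$, in which a circular orbit is an equilibrium of $(\xi,\eta)$. *)

theory Defs
  imports "HOL-Analysis.Analysis"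
begin

definition stark_solution :: "(real \<Rightarrow> real) \<Rightarrow> (real \<Rightarrow> real) \<Rightarrow> (real \<Rightarrow> real) \<Rightarrow> bool" where
  "stark_solution x y z \<longleftrightarrow>
     (\<exists>vx vy vz. \<forall>t.
        (x t, y t, z t) \<noteq> (0, 0, 0) \<and>
        (x has_real_derivative vx t) (at t) \<and>
        (y has_real_derivative vy t) (at t) \<and>
        (z has_real_derivative vz t) (at t) \<and>
        (vx has_real_derivative - x t / (sqrt ((x t)^2 + (y t)^2 + (z t)^2)) ^ 3) (at t) \<and>
        (vy has_real_derivative - y t / (sqrt ((x t)^2 + (y t)^2 + (z t)^2)) ^ 3) (at t) \<and>
        (vz has_real_derivative - z t / (sqrt ((x t)^2 + (y t)^2 + (z t)^2)) ^ 3 + 1) (at t))"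

definition circular_orbit :: "(real \<Rightarrow> real) \<Rightarrow> (real \<Rightarrow> real) \<Rightarrow> (real \<Rightarrow> real) \<Rightarrow> bool" where
  "circular_orbit x y z \<longleftrightarrow> stark_solution x y z \<and>
     (\<exists>c. \<forall>t. z t = c) \<and> (\<exists>r>0. \<forall>t. (x t)^2 + (y t)^2 = r)"

definition ang_mom :: "(real \<Rightarrow> real) \<Rightarrow> (real \<Rightarrow> real) \<Rightarrow> real \<Rightarrow> real" where
  "ang_mom x y t = x t * deriv y t - y t * deriv x t"

text \<open>Reduced Hamiltonian with L fixed, in parabolic coordinates
  x = xi eta cos phi, y = xi eta sin phi, z = (xi^2 - eta^2)/2, with momenta p_xi, p_eta:
  H = (p_xi^2 + p_eta^2)/(2(xi^2+eta^2)) + L^2/(2 xi^2 eta^2) - 2/(xi^2+eta^2) - (xi^2-eta^2)/2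
  (kinetic energy plus potential -1/|q| - z, |q| = (xi^2+eta^2)/2).\<close>
definition stark_red_H :: "real \<Rightarrow> real \<times> real \<times> real \<times> real \<Rightarrow> real" where
  "stark_red_H L u = (case u of (a, b, pa, pb) \<Rightarrow>
     (pa^2 + pb^2) / (2 * (a^2 + b^2)) + L^2 / (2 * a^2 * b^2)
       - 2 / (a^2 + b^2) - (a^2 - b^2) / 2)"

definition stark_red_field :: "real \<Rightarrow> real \<times> real \<times> real \<times> real \<Rightarrow> real \<times> real \<times> real \<times> real" where
  "stark_red_field L u = (case u of (a, b, pa, pb) \<Rightarrow>
     ( deriv (\<lambda>w. stark_red_H L (a, b, w, pb)) pa,
       deriv (\<lambda>w. stark_red_H L (a, b, pa, w)) pb,
     - deriv (\<lambda>w. stark_red_H L (w, b, pa, pb)) a,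
     - deriv (\<lambda>w. stark_red_H L (a, w, pa, pb)) b))"

definition red_lin_stable :: "real \<Rightarrow> real \<times> real \<times> real \<times> real \<Rightarrow> bool" where
  "red_lin_stable L e \<longleftrightarrow>
     (\<exists>A. (stark_red_field L has_derivative A) (at e) \<and>
        (\<forall>u. (\<forall>t\<ge>0. (u has_vector_derivative A (u t)) (at t within {0..}))
              \<longrightarrow> bounded (u ` {0..})))"

end

theory Submission
  imports Defs
begin

text \<open>A circular orbit at height s stays on a sphere |q| = N. There the horizontal force
  -(x, y)/N^3 is that of a planar harmonic oscillator and the vertical balance forces N^3 = s;
  conservation of angular momentum then makes the motion a uniform rotation through the whole
  circle a^2 + b^2 = N^2 - s^2, which is nonempty iff N > s, i.e. s < 1.
  In parabolic coordinates the orbit is the equilibrium xi^2 = N + s, eta^2 = N - s of the reduced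
  system. The Hessian of the effective potential is diagonal there, with entries (2N - 6s)/s and
  (2N + 6s)/s, so the linearisation splits into two harmonic oscillators: the second is always
  stable, the first iff N > 3s, i.e. N^2 < 1/3, i.e. s < (1/3)^(3/2).\<close>

section \<open>Uniform circular motion\<close>

lemma DERIV_unique_const:
  assumes "(f has_real_derivative f') (at t)" "\<And>t. f t = c"
  shows "f' = 0"
  using assms DERIV_unique[OF _ DERIV_const] by (metis ext)

locale circular_motion =
  fixes x y vx vy :: "real \<Rightarrow> real" and k r :: real
  assumes x_deriv: "\<And>t. (x has_real_derivative vx t) (at t)"
    and y_deriv: "\<And>t. (y has_real_derivative vy t) (at t)"
    and vx_deriv: "\<And>t. (vx has_real_derivative - k * x t) (at t)"
    and vy_deriv: "\<And>t. (vy has_real_derivative - k * y t) (at t)"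
    and radius: "\<And>t. (x t)^2 + (y t)^2 = r"
    and k_pos: "k > 0" and r_pos: "r > 0"
begin

lemma radial_velocity: "x t * vx t + y t * vy t = 0"
proof -
  have "((\<lambda>t. (x t)^2 + (y t)^2) has_real_derivative 2 * (x t * vx t + y t * vy t)) (at t)"
    by (auto intro!: derivative_eq_intros x_deriv y_deriv simp: algebra_simps)
  from DERIV_unique_const[OF this radius] show ?thesis by simp
qed

lemma speed: "(vx t)^2 + (vy t)^2 = k * r"
proof -
  have "((\<lambda>t. x t * vx t + y t * vy t) has_real_derivative
      (vx t)^2 + (vy t)^2 - k * ((x t)^2 + (y t)^2)) (at t)"
    by (auto intro!: derivative_eq_intros x_deriv y_deriv vx_deriv vy_deriv
        simp: algebra_simps power2_eq_square)
  from DERIV_unique_const[OF this radial_velocity] show ?thesis by (simp add: radius)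
qed

lemma ang_mom_eq: "ang_mom x y t = x t * vy t - y t * vx t"
  by (simp add: ang_mom_def DERIV_imp_deriv[OF x_deriv] DERIV_imp_deriv[OF y_deriv])

lemma ang_mom_const: "ang_mom x y t = ang_mom x y 0"
proof -
  have "\<forall>t. ((\<lambda>t. x t * vy t - y t * vx t) has_real_derivative 0) (at t)"
    by (auto intro!: derivative_eq_intros x_deriv y_deriv vx_deriv vy_deriv simp: algebra_simps)
  from DERIV_isconst_all[OF this] show ?thesis
    unfolding ang_mom_eq .
qed

lemma ang_mom_sq: "(ang_mom x y t)^2 = k * r^2"
proof -
  have "(x t * vy t - y t * vx t)^2 + (x t * vx t + y t * vy t)^2
      = ((x t)^2 + (y t)^2) * ((vx t)^2 + (vy t)^2)"
    by algebra
  then have "(ang_mom x y t)^2 = r * (k * r)"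
    by (simp add: ang_mom_eq radial_velocity speed radius)
  then show ?thesis
    by (simp add: power2_eq_square)
qed

definition ang_vel :: real where
  "ang_vel = ang_mom x y 0 / r"

lemma velocity: "vx t = - ang_vel * y t" "vy t = ang_vel * x t"
proof -
  have "r * vx t = - y t * ang_mom x y t + x t * (x t * vx t + y t * vy t)"
    "r * vy t = x t * ang_mom x y t + y t * (x t * vx t + y t * vy t)"
    unfolding ang_mom_eq radius[of t, symmetric] by algebra+
  then have "r * vx t = - y t * ang_mom x y 0" "r * vy t = x t * ang_mom x y 0"
    by (simp_all add: radial_velocity ang_mom_const[of t])
  then show "vx t = - ang_vel * y t" "vy t = ang_vel * x t"
    using r_pos by (simp_all add: ang_vel_def field_simps)
qed

lemma ang_vel_nonzero: "ang_vel \<noteq> 0"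
  using ang_mom_sq[of 0] k_pos r_pos by (auto simp: ang_vel_def)

lemma rotation: "Complex (x t) (y t) = Complex (x 0) (y 0) * cis (ang_vel * t)"
proof -
  \<comment> \<open>coordinates in the frame rotating with angular velocity ang_vel\<close>
  define X Y where "X t = x t * cos (ang_vel * t) + y t * sin (ang_vel * t)"
    and "Y t = y t * cos (ang_vel * t) - x t * sin (ang_vel * t)" for t
  have "\<forall>t. (X has_real_derivative 0) (at t)" "\<forall>t. (Y has_real_derivative 0) (at t)"
    unfolding X_def [abs_def] Y_def [abs_def]
    by (auto intro!: derivative_eq_intros x_deriv y_deriv simp: velocity algebra_simps)
  then have "X t = x 0" "Y t = y 0"
    using DERIV_isconst_all[of X t 0] DERIV_isconst_all[of Y t 0] by (simp_all add: X_def Y_def)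
  moreover have "x t = X t * cos (ang_vel * t) - Y t * sin (ang_vel * t)"
    "y t = X t * sin (ang_vel * t) + Y t * cos (ang_vel * t)"
    unfolding X_def Y_def using sin_cos_squared_add[of "ang_vel * t"] by algebra+
  ultimately show ?thesis
    by (simp add: complex_eq_iff)
qed

lemma range_circle: "range (\<lambda>t. (x t, y t)) = {(a, b). a^2 + b^2 = r}"
proof
  show "range (\<lambda>t. (x t, y t)) \<subseteq> {(a, b). a^2 + b^2 = r}"
    using radius by auto
  show "{(a, b). a^2 + b^2 = r} \<subseteq> range (\<lambda>t. (x t, y t))"
  proof
    fix p assume "p \<in> {(a, b). a^2 + b^2 = r}"
    then obtain a b where "p = (a, b)" "a^2 + b^2 = r" by blast
    define w q where "w = Complex (x 0) (y 0)" and "q = Complex a b / w"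
    have "cmod (Complex a b) = cmod w"
      using \<open>a^2 + b^2 = r\<close> radius[of 0] by (simp add: w_def complex_norm)
    moreover have "w \<noteq> 0"
      using radius[of 0] r_pos by (auto simp: w_def complex_eq_iff)
    ultimately have "cmod q = 1"
      by (simp add: q_def norm_divide)
    then have "q \<noteq> 0" by auto
    with \<open>cmod q = 1\<close> have "cis (Arg q) = q"
      by (simp add: cis_Arg sgn_eq)
    define t where "t = Arg q / ang_vel"
    have "Complex (x t) (y t) = w * cis (Arg q)"
      using rotation[of t] ang_vel_nonzero by (simp add: t_def w_def)
    also have "\<dots> = Complex a b"
      unfolding \<open>cis (Arg q) = q\<close> using \<open>w \<noteq> 0\<close> by (simp add: q_def)
    finally show "p \<in> range (\<lambda>t. (x t, y t))"
      using \<open>p = (a, b)\<close> by (auto simp: complex_eq_iff)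
  qed
qed

end

section \<open>Circular orbits of the Stark problem\<close>

lemma circular_orbit_motion:
  assumes "circular_orbit x y z" and z: "\<And>t. z t = s"
  obtains vx vy where "circular_motion x y vx vy (1 / s) ((x 0)^2 + (y 0)^2)"
    and "(x 0)^2 + (y 0)^2 + s^2 = (root 3 s)^2"
proof -
  obtain r where "r > 0" and r: "\<And>t. (x t)^2 + (y t)^2 = r"
    using assms(1) by (auto simp: circular_orbit_def)
  obtain vx vy vz where sol: "\<And>t.
        (x has_real_derivative vx t) (at t) \<and>
        (y has_real_derivative vy t) (at t) \<and>
        (z has_real_derivative vz t) (at t) \<and>
        (vx has_real_derivative - x t / (sqrt ((x t)^2 + (y t)^2 + (z t)^2)) ^ 3) (at t) \<and>
        (vy has_real_derivative - y t / (sqrt ((x t)^2 + (y t)^2 + (z t)^2)) ^ 3) (at t) \<and>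
        (vz has_real_derivative - z t / (sqrt ((x t)^2 + (y t)^2 + (z t)^2)) ^ 3 + 1) (at t)"
    using assms(1) unfolding circular_orbit_def stark_solution_def by metis
  define N where "N = sqrt (r + s^2)"
  have dist: "sqrt ((x t)^2 + (y t)^2 + s^2) = N" for t
    by (simp add: N_def r)
  have "N > 0"
    using \<open>r > 0\<close> by (simp add: N_def add_pos_nonneg)
  have "vz t = 0" for t
    using sol z by (blast intro: DERIV_unique_const)
  moreover have "(vz has_real_derivative - s / N^3 + 1) (at 0)"
    using sol[of 0] by (simp add: z dist)
  ultimately have "- s / N^3 + 1 = 0"
    by (blast intro: DERIV_unique_const)
  then have "N^3 = s"
    using \<open>N > 0\<close> by (simp add: field_simps)
  then have "root 3 s = N"
    by (simp add: odd_real_root_unique)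
  have "circular_motion x y vx vy (1 / s) r"
  proof
    show "(vx has_real_derivative - (1 / s) * x t) (at t)"
      "(vy has_real_derivative - (1 / s) * y t) (at t)" for t
      using sol[of t] by (simp_all add: z dist \<open>N^3 = s\<close>)
    show "1 / s > 0"
      using \<open>N > 0\<close> \<open>N^3 = s\<close> by (metis zero_less_divide_1_iff zero_less_power)
  qed (use sol r \<open>r > 0\<close> in auto)
  moreover have "r + s^2 = (root 3 s)^2"
    using \<open>root 3 s = N\<close> \<open>r > 0\<close> by (simp add: N_def)
  ultimately show thesis
    using that r[of 0] by blast
qed

lemma circular_orbit_range:
  assumes "circular_orbit x y z" and z: "\<And>t. z t = s"
  shows "range (\<lambda>t. (x t, y t, z t)) = {(a, b, c). a^2 + b^2 + s^2 = (root 3 s)^2 \<and> c = s}"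
proof -
  obtain vx vy where M: "circular_motion x y vx vy (1 / s) ((x 0)^2 + (y 0)^2)"
    and r: "(x 0)^2 + (y 0)^2 + s^2 = (root 3 s)^2"
    using circular_orbit_motion[OF assms] .
  have "range (\<lambda>t. (x t, y t, z t)) = (\<lambda>(a, b). (a, b, s)) ` range (\<lambda>t. (x t, y t))"
    by (simp add: image_image z)
  also have "\<dots> = {(a, b, c). a^2 + b^2 + s^2 = (root 3 s)^2 \<and> c = s}"
    unfolding circular_motion.range_circle[OF M] using r by auto
  finally show ?thesis .
qed

lemma stark_solution_uniform_rotation:
  assumes "s > 0" and R: "R^2 + s^2 = (root 3 s)^2"
  shows "stark_solution (\<lambda>t. R * cos (t / sqrt s)) (\<lambda>t. R * sin (t / sqrt s)) (\<lambda>_. s)"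
proof -
  have "(R * cos (t / sqrt s))^2 + (R * sin (t / sqrt s))^2 + s^2 = (root 3 s)^2" for t
    using R sin_cos_squared_add[of "t / sqrt s"] by algebra
  then have dist: "sqrt ((R * cos (t / sqrt s))^2 + (R * sin (t / sqrt s))^2 + s^2) ^ 3 = s" for t
    using \<open>s > 0\<close> by (simp add: odd_real_root_pow)
  have "sqrt s * sqrt s = s"
    using \<open>s > 0\<close> by simp
  then show ?thesis
    unfolding stark_solution_def dist
    using \<open>s > 0\<close>
    by (intro exI[of _ "\<lambda>t. - R * sin (t / sqrt s) / sqrt s"] exI[of _ "\<lambda>t. R * cos (t / sqrt s) / sqrt s"]
        exI[of _ "\<lambda>_. 0"] allI conjI)
      (auto intro!: derivative_eq_intros simp: field_simps)
qed

lemma circular_orbit_exists: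
  assumes "0 < s" "s < 1"
  shows "\<exists>x y z. circular_orbit x y z \<and> (\<forall>t. z t = s)"
proof -
  have "s^3 < s"
    using power_strict_decreasing[of 1 3 s] assms by simp
  then have "s < root 3 s"
    using assms by (metis odd_real_root_power_cancel real_root_less_iff odd_numeral zero_less_numeral)
  define R where "R = sqrt ((root 3 s)^2 - s^2)"
  have "R > 0" "R^2 + s^2 = (root 3 s)^2"
    using \<open>s < root 3 s\<close> assms by (simp_all add: R_def power_strict_mono)
  have "(R * cos (t / sqrt s))^2 + (R * sin (t / sqrt s))^2 = R^2" for t
    using sin_cos_squared_add[of "t / sqrt s"] by algebra
  moreover have "stark_solution (\<lambda>t. R * cos (t / sqrt s)) (\<lambda>t. R * sin (t / sqrt s)) (\<lambda>_. s)"
    using \<open>s > 0\<close> \<open>R^2 + s^2 = (root 3 s)^2\<close> by (rule stark_solution_uniform_rotation)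
  ultimately have "circular_orbit (\<lambda>t. R * cos (t / sqrt s)) (\<lambda>t. R * sin (t / sqrt s)) (\<lambda>_. s)"
    using \<open>R > 0\<close> unfolding circular_orbit_def by (blast intro: zero_less_power)
  then show ?thesis by blast
qed

section \<open>Harmonic oscillators\<close>

definition oscillator_solution :: "real \<Rightarrow> real \<Rightarrow> (real \<Rightarrow> real) \<Rightarrow> (real \<Rightarrow> real) \<Rightarrow> bool" where
  "oscillator_solution m k a p \<longleftrightarrow> (\<forall>t\<ge>0.
     (a has_real_derivative p t / m) (at t within {0..}) \<and>
     (p has_real_derivative - (k * a t)) (at t within {0..}))"

lemma oscillator_energy_const:
  assumes "oscillator_solution m k a p" "m \<noteq> 0" "t \<ge> 0"
  shows "k * (a t)^2 + (p t)^2 / m = k * (a 0)^2 + (p 0)^2 / m"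
proof -
  have "\<exists>c. \<forall>t\<in>{0..}. k * (a t)^2 + (p t)^2 / m = c"
  proof (rule has_field_derivative_zero_constant)
    fix t :: real
    assume "t \<in> {0..}"
    then show "((\<lambda>t. k * (a t)^2 + (p t)^2 / m) has_real_derivative 0) (at t within {0..})"
      using assms(1,2) unfolding oscillator_solution_def
      by (auto intro!: derivative_eq_intros simp: field_simps)
  qed (rule convex_real_interval)
  then show ?thesis using assms(3) by fastforce
qed

lemma oscillator_bounded:
  assumes sol: "oscillator_solution m k a p" and "m > 0" "k > 0"
  shows "bounded (a ` {0..})" "bounded (p ` {0..})"
proof -
  define E where "E = k * (a 0)^2 + (p 0)^2 / m"
  have "(a t)^2 \<le> E / k" "(p t)^2 \<le> m * E" if "t \<ge> 0" for t
  proof -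
    have "k * (a t)^2 + (p t)^2 / m = E"
      using oscillator_energy_const[OF sol _ that] \<open>m > 0\<close> by (simp add: E_def)
    moreover have "0 \<le> k * (a t)^2" "0 \<le> (p t)^2 / m"
      using \<open>m > 0\<close> \<open>k > 0\<close> by simp_all
    ultimately have "k * (a t)^2 \<le> E" "(p t)^2 / m \<le> E"
      by linarith+
    then show "(a t)^2 \<le> E / k" "(p t)^2 \<le> m * E"
      using \<open>m > 0\<close> \<open>k > 0\<close> by (simp_all add: pos_le_divide_eq pos_divide_le_eq mult.commute)
  qed
  then have "\<bar>a t\<bar> \<le> sqrt (E / k)" "\<bar>p t\<bar> \<le> sqrt (m * E)" if "t \<ge> 0" for t
    using that by (metis real_sqrt_abs real_sqrt_le_mono)+
  then show "bounded (a ` {0..})" "bounded (p ` {0..})"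
    unfolding bounded_real by blast+
qed

lemma unbounded_if_linear_lower_bound:
  fixes f :: "real \<Rightarrow> real"
  assumes "c > 0" "\<And>t. t \<ge> 0 \<Longrightarrow> c * t \<le> f t"
  shows "\<not> bounded (f ` {0..})"
proof
  assume "bounded (f ` {0..})"
  then obtain B where B: "\<And>t. t \<ge> 0 \<Longrightarrow> \<bar>f t\<bar> \<le> B"
    unfolding bounded_real by auto
  define T where "T = (\<bar>B\<bar> + 1) / c"
  have "T \<ge> 0" "c * T = \<bar>B\<bar> + 1"
    using \<open>c > 0\<close> by (simp_all add: T_def)
  then have "\<bar>B\<bar> + 1 \<le> f T" "\<bar>f T\<bar> \<le> B"
    using assms(2) B by force+
  then show False
    using abs_ge_self[of B] abs_ge_self[of "f T"] by linarith
qed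

lemma oscillator_unbounded:
  assumes "m > 0" "k \<le> 0"
  obtains a p where "oscillator_solution m k a p" "\<not> bounded (a ` {0..})"
proof (cases "k = 0")
  case True
  have "oscillator_solution m k (\<lambda>t. t) (\<lambda>_. m)"
    unfolding oscillator_solution_def using True \<open>m > 0\<close> by (auto intro!: derivative_eq_intros)
  moreover have "\<not> bounded ((\<lambda>t::real. t) ` {0..})"
    by (rule unbounded_if_linear_lower_bound[of 1]) simp_all
  ultimately show ?thesis by (rule that)
next
  case False
  define l where "l = sqrt (- k / m)"
  have "- k / m > 0"
    using \<open>m > 0\<close> \<open>k \<le> 0\<close> False by (simp add: divide_neg_pos)
  then have "l > 0" and l2: "- k = m * l^2"
    using \<open>m > 0\<close> by (simp_all add: l_def)
  have "oscillator_solution m k (\<lambda>t. exp (l * t)) (\<lambda>t. m * l * exp (l * t))"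
    unfolding oscillator_solution_def minus_mult_left l2 using \<open>m > 0\<close>
    by (auto intro!: derivative_eq_intros simp: power2_eq_square)
  moreover have "\<not> bounded ((\<lambda>t. exp (l * t)) ` {0..})"
  proof (rule unbounded_if_linear_lower_bound[OF \<open>l > 0\<close>])
    show "l * t \<le> exp (l * t)" for t
      using exp_ge_add_one_self[of "l * t"] by linarith
  qed
  ultimately show ?thesis by (rule that)
qed

lemma oscillator_solution_zero: "oscillator_solution m k (\<lambda>_. 0) (\<lambda>_. 0)"
  by (simp add: oscillator_solution_def)

lemma has_vector_derivative_Pair_iff:
  "((\<lambda>t. (f t, g t)) has_vector_derivative (f', g')) (at t within S) \<longleftrightarrow>
     (f has_vector_derivative f') (at t within S) \<and> (g has_vector_derivative g') (at t within S)"
proof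
  assume "((\<lambda>t. (f t, g t)) has_vector_derivative (f', g')) (at t within S)"
  then have "((\<lambda>t. (f t, g t)) has_derivative (\<lambda>x. (x *\<^sub>R f', x *\<^sub>R g'))) (at t within S)"
    by (simp add: has_vector_derivative_def)
  from has_derivative_fst[OF this] has_derivative_snd[OF this]
  show "(f has_vector_derivative f') (at t within S) \<and> (g has_vector_derivative g') (at t within S)"
    by (simp add: has_vector_derivative_def)
qed (simp add: has_vector_derivative_Pair)

definition forward_bounded :: "('a::real_normed_vector \<Rightarrow> 'a) \<Rightarrow> bool" where
  "forward_bounded A \<longleftrightarrow>
     (\<forall>u. (\<forall>t\<ge>0. (u has_vector_derivative A (u t)) (at t within {0..})) \<longrightarrow> bounded (u ` {0..}))"

text \<open>The Hamiltonian vector field of (p^2 + q^2)/(2 m) + (kaa a^2 + 2 kab a b + kbb b^2)/2.\<close>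

definition lin_ham_field :: "real \<Rightarrow> real \<Rightarrow> real \<Rightarrow> real \<Rightarrow> real \<times> real \<times> real \<times> real \<Rightarrow> real \<times> real \<times> real \<times> real" where
  "lin_ham_field m kaa kab kbb = (\<lambda>(a, b, p, q). (p / m, q / m, - (kaa * a + kab * b), - (kab * a + kbb * b)))"

lemma lin_ham_field_diag_solution_iff:
  "(\<forall>t\<ge>0. ((\<lambda>t. (a t, b t, p t, q t)) has_vector_derivative lin_ham_field m k1 0 k2 (a t, b t, p t, q t))
      (at t within {0..}))
   \<longleftrightarrow> oscillator_solution m k1 a p \<and> oscillator_solution m k2 b q"
  by (simp add: lin_ham_field_def oscillator_solution_def has_vector_derivative_Pair_iff
      has_real_derivative_iff_has_vector_derivative all_conj_distrib) blast

lemma forward_bounded_lin_ham_field_diag_iff: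
  assumes "m > 0"
  shows "forward_bounded (lin_ham_field m k1 0 k2) \<longleftrightarrow> k1 > 0 \<and> k2 > 0"
proof
  assume "forward_bounded (lin_ham_field m k1 0 k2)"
  then have bnd: "bounded ((\<lambda>t. (a t, b t, p t, q t)) ` {0..})"
    if "oscillator_solution m k1 a p" "oscillator_solution m k2 b q" for a b p q
    using that lin_ham_field_diag_solution_iff[of a b p q] unfolding forward_bounded_def by blast
  have "bounded (a ` {0..})" if "oscillator_solution m k1 a p" for a p
    using bounded_fst[OF bnd[OF that oscillator_solution_zero]] by (simp add: image_image)
  moreover have "bounded (b ` {0..})" if "oscillator_solution m k2 b q" for b q
    using bounded_fst[OF bounded_snd[OF bnd[OF oscillator_solution_zero that]]] by (simp add: image_image)
  ultimately show "k1 > 0 \<and> k2 > 0"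
    using oscillator_unbounded[OF \<open>m > 0\<close>] by (metis not_le)
next
  assume "k1 > 0 \<and> k2 > 0"
  show "forward_bounded (lin_ham_field m k1 0 k2)"
    unfolding forward_bounded_def
  proof (intro allI impI)
    fix u :: "real \<Rightarrow> real \<times> real \<times> real \<times> real"
    define a b p q where "a t = fst (u t)" and "b t = fst (snd (u t))"
      and "p t = fst (snd (snd (u t)))" and "q t = snd (snd (snd (u t)))" for t
    have u: "u = (\<lambda>t. (a t, b t, p t, q t))"
      by (simp add: a_def b_def p_def q_def)
    assume "\<forall>t\<ge>0. (u has_vector_derivative lin_ham_field m k1 0 k2 (u t)) (at t within {0..})"
    then have "oscillator_solution m k1 a p" "oscillator_solution m k2 b q"
      unfolding u lin_ham_field_diag_solution_iff by auto
    then have "bounded (a ` {0..} \<times> b ` {0..} \<times> p ` {0..} \<times> q ` {0..})"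
      using oscillator_bounded \<open>m > 0\<close> \<open>k1 > 0 \<and> k2 > 0\<close> by (simp add: bounded_Times)
    then show "bounded (u ` {0..})"
      by (rule bounded_subset) (auto simp: u)
  qed
qed

section \<open>Linearisation of the reduced system at a circular orbit\<close>

definition stark_red_field_formula :: "real \<Rightarrow> real \<times> real \<times> real \<times> real \<Rightarrow> real \<times> real \<times> real \<times> real" where
  "stark_red_field_formula L = (\<lambda>(a, b, pa, pb).
     (pa / (a^2 + b^2), pb / (a^2 + b^2),
      (pa^2 + pb^2) * a / (a^2 + b^2)^2 + L^2 / (a^3 * b^2) - 4 * a / (a^2 + b^2)^2 + a,
      (pa^2 + pb^2) * b / (a^2 + b^2)^2 + L^2 / (a^2 * b^3) - 4 * b / (a^2 + b^2)^2 - b))"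

lemma stark_red_field_eq_formula:
  assumes "a \<noteq> 0" "b \<noteq> 0"
  shows "stark_red_field L (a, b, pa, pb) = stark_red_field_formula L (a, b, pa, pb)"
proof -
  have m: "a^2 + b^2 \<noteq> 0" "2 * a^2 + 2 * b^2 \<noteq> 0"
    using assms by (simp_all add: sum_power2_eq_zero_iff add_nonneg_eq_0_iff)
  have "deriv (\<lambda>w. stark_red_H L (a, b, w, pb)) pa = pa / (a^2 + b^2)"
    "deriv (\<lambda>w. stark_red_H L (a, b, pa, w)) pb = pb / (a^2 + b^2)"
    "deriv (\<lambda>w. stark_red_H L (w, b, pa, pb)) a =
       - ((pa^2 + pb^2) * a / (a^2 + b^2)^2 + L^2 / (a^3 * b^2) - 4 * a / (a^2 + b^2)^2 + a)"
    "deriv (\<lambda>w. stark_red_H L (a, w, pa, pb)) b =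
       - ((pa^2 + pb^2) * b / (a^2 + b^2)^2 + L^2 / (a^2 * b^3) - 4 * b / (a^2 + b^2)^2 - b)"
    unfolding stark_red_H_def prod.case using assms m
    by (intro DERIV_imp_deriv; auto intro!: derivative_eq_intros; simp add: divide_simps; algebra)+
  then show ?thesis
    by (simp add: stark_red_field_def stark_red_field_formula_def)
qed

text \<open>Second partial derivatives of the effective potential
  V a b = L^2/(2 a^2 b^2) - 2/(a^2 + b^2) - (a^2 - b^2)/2 of the reduced Hamiltonian.\<close>

definition eff_pot_aa :: "real \<Rightarrow> real \<Rightarrow> real \<Rightarrow> real" where
  "eff_pot_aa L a b = 3 * L^2 / (a^4 * b^2) + 4 / (a^2 + b^2)^2 - 16 * a^2 / (a^2 + b^2)^3 - 1"

definition eff_pot_ab :: "real \<Rightarrow> real \<Rightarrow> real \<Rightarrow> real" where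
  "eff_pot_ab L a b = 2 * L^2 / (a^3 * b^3) - 16 * a * b / (a^2 + b^2)^3"

definition eff_pot_bb :: "real \<Rightarrow> real \<Rightarrow> real \<Rightarrow> real" where
  "eff_pot_bb L a b = 3 * L^2 / (a^2 * b^4) + 4 / (a^2 + b^2)^2 - 16 * b^2 / (a^2 + b^2)^3 + 1"

lemma stark_red_field_formula_has_derivative:
  assumes "a \<noteq> 0" "b \<noteq> 0"
  shows "(stark_red_field_formula L has_derivative
     lin_ham_field (a^2 + b^2) (eff_pot_aa L a b) (eff_pot_ab L a b) (eff_pot_bb L a b)) (at (a, b, 0, 0))"
proof -
  have m: "a^2 + b^2 \<noteq> 0"
    using assms by (simp add: sum_power2_eq_zero_iff)
  show ?thesis
    unfolding stark_red_field_formula_def split_beta'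
    apply (auto intro!: derivative_eq_intros simp: m assms)
    apply (rule ext)
    apply (simp add: lin_ham_field_def split_beta' eff_pot_aa_def eff_pot_ab_def eff_pot_bb_def
        divide_simps m assms)
    apply (intro conjI; algebra)
    done
qed

lemma stark_red_field_has_derivative:
  assumes "a \<noteq> 0" "b \<noteq> 0"
  shows "(stark_red_field L has_derivative
     lin_ham_field (a^2 + b^2) (eff_pot_aa L a b) (eff_pot_ab L a b) (eff_pot_bb L a b)) (at (a, b, 0, 0))"
proof (rule has_derivative_transform_within_open[OF stark_red_field_formula_has_derivative[OF assms]])
  show "open ((- {0::real}) \<times> (- {0::real}) \<times> (UNIV :: (real \<times> real) set))"
    by (intro open_Times open_Compl closed_singleton open_UNIV)
  fix u :: "real \<times> real \<times> real \<times> real"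
  assume "u \<in> (- {0}) \<times> (- {0}) \<times> UNIV"
  then show "stark_red_field_formula L u = stark_red_field L u"
    by (cases u) (simp add: stark_red_field_eq_formula)
qed (use assms in auto)

lemma eff_pot_hess_at_circular_orbit:
  assumes "\<xi> \<noteq> 0" "\<eta> \<noteq> 0" "N > 0" and N3: "N^3 = s"
    and \<xi>2: "\<xi>^2 = N + s" and \<eta>2: "\<eta>^2 = N - s" and L2: "L^2 * s = \<xi>^4 * \<eta>^4"
  shows "eff_pot_ab L \<xi> \<eta> = 0"
    and "eff_pot_aa L \<xi> \<eta> = (2 * N - 6 * s) / s"
    and "eff_pot_bb L \<xi> \<eta> = (2 * N + 6 * s) / s"
proof -
  have "s > 0" using N3 \<open>N > 0\<close> by (metis zero_less_power)
  have m2: "(\<xi>^2 + \<eta>^2)^2 = 4 * N^2" and m3: "(\<xi>^2 + \<eta>^2)^3 = 8 * s"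
    by (simp_all add: \<xi>2 \<eta>2 flip: N3)
  have N2: "1 / N^2 = N / s"
    using \<open>N > 0\<close> by (simp add: field_simps flip: N3) algebra
  have "L^2 = \<xi>^4 * \<eta>^4 / s"
    using L2 \<open>s > 0\<close> by (simp add: field_simps)
  then have L2_quot: "3 * L^2 / (\<xi>^4 * \<eta>^2) = 3 * \<eta>^2 / s" "3 * L^2 / (\<xi>^2 * \<eta>^4) = 3 * \<xi>^2 / s"
    "2 * L^2 / (\<xi>^3 * \<eta>^3) = 2 * \<xi> * \<eta> / s"
    using assms(1,2) by (simp_all add: field_simps eval_nat_numeral)
  have pot_quot: "4 / (\<xi>^2 + \<eta>^2)^2 = N / s"
    using N2 by (simp add: m2)
  show "eff_pot_ab L \<xi> \<eta> = 0"
    and "eff_pot_aa L \<xi> \<eta> = (2 * N - 6 * s) / s"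
    and "eff_pot_bb L \<xi> \<eta> = (2 * N + 6 * s) / s"
    unfolding eff_pot_aa_def eff_pot_ab_def eff_pot_bb_def L2_quot m3 pot_quot
    using \<open>s > 0\<close> by (simp_all add: \<xi>2 \<eta>2 field_simps)
qed

lemma red_lin_stable_iff_forward_bounded:
  assumes "(stark_red_field L has_derivative A) (at e)"
  shows "red_lin_stable L e \<longleftrightarrow> forward_bounded A"
  using assms has_derivative_unique unfolding red_lin_stable_def forward_bounded_def by blast

lemma red_lin_stable_at_circular_orbit:
  assumes "\<xi> \<noteq> 0" "\<eta> \<noteq> 0" "N > 0" "N^3 = s" "\<xi>^2 = N + s" "\<eta>^2 = N - s" "L^2 * s = \<xi>^4 * \<eta>^4"
  shows "red_lin_stable L (\<xi>, \<eta>, 0, 0) \<longleftrightarrow> 3 * s < N"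
proof -
  have "s > 0"
    using \<open>N > 0\<close> \<open>N^3 = s\<close> by (metis zero_less_power)
  note hess = eff_pot_hess_at_circular_orbit[OF assms]
  have "red_lin_stable L (\<xi>, \<eta>, 0, 0) \<longleftrightarrow>
      forward_bounded (lin_ham_field (\<xi>^2 + \<eta>^2) ((2 * N - 6 * s) / s) 0 ((2 * N + 6 * s) / s))"
    using stark_red_field_has_derivative[of \<xi> \<eta> L] hess assms(1,2)
    by (simp add: red_lin_stable_iff_forward_bounded)
  also have "\<dots> \<longleftrightarrow> (2 * N - 6 * s) / s > 0 \<and> (2 * N + 6 * s) / s > 0"
    using assms(1,2) by (intro forward_bounded_lin_ham_field_diag_iff) (simp add: add_pos_pos)
  also have "\<dots> \<longleftrightarrow> 3 * s < N"
    using \<open>s > 0\<close> \<open>N > 0\<close> by (simp add: zero_less_divide_iff)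
  finally show ?thesis .
qed

lemma circular_orbit_red_lin_stable_iff:
  assumes "circular_orbit x y z" "\<And>t. z t = s" "\<xi> > 0" "\<eta> > 0"
    and \<xi>\<eta>: "\<xi> * \<eta> = sqrt ((x 0)^2 + (y 0)^2)" and s: "(\<xi>^2 - \<eta>^2) / 2 = s"
  shows "red_lin_stable (ang_mom x y 0) (\<xi>, \<eta>, 0, 0) \<longleftrightarrow> 3 * s < root 3 s"
proof -
  obtain vx vy where M: "circular_motion x y vx vy (1 / s) ((x 0)^2 + (y 0)^2)"
    and N: "(x 0)^2 + (y 0)^2 + s^2 = (root 3 s)^2"
    using circular_orbit_motion[OF assms(1,2)] .
  have r: "(x 0)^2 + (y 0)^2 = \<xi>^2 * \<eta>^2"
    using \<xi>\<eta> by (simp flip: power_mult_distrib)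
  have "s > 0"
    using circular_motion.k_pos[OF M] by simp
  have "((\<xi>^2 + \<eta>^2) / 2)^2 = \<xi>^2 * \<eta>^2 + s^2"
    unfolding s[symmetric] by (simp add: power_divide) algebra
  then have "(root 3 s)^2 = ((\<xi>^2 + \<eta>^2) / 2)^2"
    using N by (simp add: r)
  then have "root 3 s = (\<xi>^2 + \<eta>^2) / 2"
    using \<open>s > 0\<close> by (simp add: power2_eq_iff_nonneg add_nonneg_nonneg)
  moreover have "(ang_mom x y 0)^2 * s = \<xi>^4 * \<eta>^4"
    using circular_motion.ang_mom_sq[OF M, of 0] \<open>s > 0\<close> by (simp add: r field_simps)
  ultimately show ?thesis
    using assms(3,4) \<open>s > 0\<close> s
    by (intro red_lin_stable_at_circular_orbit) (auto simp: odd_real_root_pow)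
qed

lemma cube_root_stability_threshold:
  assumes "s > 0"
  shows "s < (1/3) powr (3/2) \<longleftrightarrow> 3 * s < root 3 s"
proof -
  define N c where "N = root 3 s" and "c = sqrt (1/3 :: real)"
  have "N > 0" "N^3 = s"
    using assms by (simp_all add: N_def odd_real_root_pow)
  have "(1/3::real) powr (3/2) = c ^ 3"
    by (simp add: c_def powr_power flip: powr_half_sqrt)
  then have "s < (1/3) powr (3/2) \<longleftrightarrow> \<not> c^3 \<le> N^3"
    using \<open>N^3 = s\<close> by auto
  also have "\<dots> \<longleftrightarrow> N < c"
    using \<open>N > 0\<close> by (simp add: c_def not_le)
  also have "\<dots> \<longleftrightarrow> N^2 < 1/3"
    using \<open>N > 0\<close> real_sqrt_less_iff[of "N^2" "1/3"] by (simp add: c_def)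
  also have "\<dots> \<longleftrightarrow> 3 * s < N"
    using \<open>N > 0\<close> by (simp flip: \<open>N^3 = s\<close> add: power3_eq_cube power2_eq_square mult.commute)
  finally show ?thesis by (simp add: N_def)
qed

theorem proposition5p5:
  fixes s :: real
  assumes "0 < s" and "s < 1"
  shows "(\<exists>x y z. circular_orbit x y z \<and> (\<forall>t. z t = s))
    \<and> (\<forall>x y z x' y' z'. circular_orbit x y z \<and> (\<forall>t. z t = s)
          \<and> circular_orbit x' y' z' \<and> (\<forall>t. z' t = s)
          \<longrightarrow> range (\<lambda>t. (x t, y t, z t)) = range (\<lambda>t. (x' t, y' t, z' t)))
    \<and> (\<forall>x y z \<xi> \<eta>. circular_orbit x y z \<and> (\<forall>t. z t = s)
          \<and> \<xi> > 0 \<and> \<eta> > 0 \<and> \<xi> * \<eta> = sqrt ((x 0)^2 + (y 0)^2) \<and> (\<xi>^2 - \<eta>^2) / 2 = s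
          \<longrightarrow> (red_lin_stable (ang_mom x y 0) (\<xi>, \<eta>, 0, 0) \<longleftrightarrow> s < (1/3) powr (3/2)))"
proof (intro conjI allI impI)
  show "\<exists>x y z. circular_orbit x y z \<and> (\<forall>t. z t = s)"
    using circular_orbit_exists[OF assms] .
next
  fix x y z x' y' z' :: "real \<Rightarrow> real"
  assume "circular_orbit x y z \<and> (\<forall>t. z t = s) \<and> circular_orbit x' y' z' \<and> (\<forall>t. z' t = s)"
  then show "range (\<lambda>t. (x t, y t, z t)) = range (\<lambda>t. (x' t, y' t, z' t))"
    using circular_orbit_range[of x y z s] circular_orbit_range[of x' y' z' s] by metis
next
  fix x y z :: "real \<Rightarrow> real" and \<xi> \<eta> :: real
  assume "circular_orbit x y z \<and> (\<forall>t. z t = s)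
    \<and> \<xi> > 0 \<and> \<eta> > 0 \<and> \<xi> * \<eta> = sqrt ((x 0)^2 + (y 0)^2) \<and> (\<xi>^2 - \<eta>^2) / 2 = s"
  then show "red_lin_stable (ang_mom x y 0) (\<xi>, \<eta>, 0, 0) \<longleftrightarrow> s < (1/3) powr (3/2)"
    using circular_orbit_red_lin_stable_iff[of x y z s \<xi> \<eta>] cube_root_stability_threshold[OF \<open>0 < s\<close>]
    by metis
qed

end
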